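(* Let $M$ be a geodesic metric space with convex metric, $Z\subseteq M$, $\nu>0$, $L\ge0$. If a geodesic triangle $\Delta$ in $M$ is $\nu$--thin relative to $Z$ and the $\nu$--fat part of some side of $\Delta$ has length at most $L$, then $\Delta$ is $2(L+\nu)$--thin.
   Context: For a geodesic triangle $\Delta(a,b,c)$ let $\pi\colon\Delta\to Y_{abc}$ be the map to the comparison tripod. $\Delta$ is $\nu$--thin if $\operatorname{diam}\pi^{-1}(p)\le\nu$ for all $p\in Y_{abc}$. $\Delta$ is $\nu$--thin relative to $U$ if it is not $\nu$--thin and for every $p\in Y_{abc}$ either $\operatorname{diam}\pi^{-1}(p)\le\nu$ or $\pi^{-1}(p)\subseteq N_\nu(U)$. The $\nu$--fat part of $\Delta$ is the union of the fibers of $\pi$ of diameter $\ge\nu$; the $\nu$--fat part of a side is its intersection with the $\nu$--fat part of $\Delta$. A metric is convex if the distance function between two constant-speed geodesics is convex. *)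

theory Defs
  imports "HOL-Analysis.Analysis"
begin

definition geodesic :: "(real \<Rightarrow> 'a::metric_space) \<Rightarrow> 'a \<Rightarrow> 'a \<Rightarrow> bool" where
  "geodesic g x y \<longleftrightarrow> g 0 = x \<and> g (dist x y) = y \<and>
     (\<forall>s\<in>{0..dist x y}. \<forall>t\<in>{0..dist x y}. dist (g s) (g t) = \<bar>s - t\<bar>)"

definition geodesic_space :: "'a::metric_space set \<Rightarrow> bool" where
  "geodesic_space S \<longleftrightarrow>
     (\<forall>x\<in>S. \<forall>y\<in>S. \<exists>g. geodesic g x y \<and> g ` {0..dist x y} \<subseteq> S)"

definition cs_geodesic :: "(real \<Rightarrow> 'a::metric_space) \<Rightarrow> bool" where
  "cs_geodesic \<gamma> \<longleftrightarrow>
     (\<forall>s\<in>{0..1}. \<forall>t\<in>{0..1}. dist (\<gamma> s) (\<gamma> t) = \<bar>s - t\<bar> * dist (\<gamma> 0) (\<gamma> 1))"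

definition convex_metric :: "'a::metric_space set \<Rightarrow> bool" where
  "convex_metric S \<longleftrightarrow>
     (\<forall>\<gamma>1 \<gamma>2. cs_geodesic \<gamma>1 \<and> cs_geodesic \<gamma>2 \<and> \<gamma>1 ` {0..1} \<subseteq> S \<and> \<gamma>2 ` {0..1} \<subseteq> S
        \<longrightarrow> convex_on {0..1} (\<lambda>t. dist (\<gamma>1 t) (\<gamma>2 t)))"

text \<open>A geodesic triangle Delta(a,b,c) with sides p0 = [a,b], p1 = [b,c], p2 = [c,a];
  side i runs from vertex i to vertex (i+1) mod 3.\<close>
definition geodesic_triangle ::
  "'a::metric_space \<Rightarrow> 'a \<Rightarrow> 'a \<Rightarrow> (real \<Rightarrow> 'a) \<Rightarrow> (real \<Rightarrow> 'a) \<Rightarrow> (real \<Rightarrow> 'a) \<Rightarrow> bool" where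
  "geodesic_triangle a b c p0 p1 p2 \<longleftrightarrow> geodesic p0 a b \<and> geodesic p1 b c \<and> geodesic p2 c a"

definition side_len :: "'a::metric_space \<Rightarrow> 'a \<Rightarrow> 'a \<Rightarrow> nat \<Rightarrow> real" where
  "side_len a b c i = (if i = 0 then dist a b else if i = 1 then dist b c else dist c a)"

definition side_pt :: "(real \<Rightarrow> 'a) \<Rightarrow> (real \<Rightarrow> 'a) \<Rightarrow> (real \<Rightarrow> 'a) \<Rightarrow> nat \<Rightarrow> real \<Rightarrow> 'a" where
  "side_pt p0 p1 p2 i t = (if i = 0 then p0 t else if i = 1 then p1 t else p2 t)"

definition gromov :: "'a::metric_space \<Rightarrow> 'a \<Rightarrow> 'a \<Rightarrow> real" where
  "gromov x y z = (dist x y + dist x z - dist y z) / 2"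

text \<open>Leg length of the tripod at vertex i (0 = a, 1 = b, 2 = c).\<close>
definition leg_len :: "'a::metric_space \<Rightarrow> 'a \<Rightarrow> 'a \<Rightarrow> nat \<Rightarrow> real" where
  "leg_len a b c i = (if i = 0 then gromov a b c else if i = 1 then gromov b c a else gromov c a b)"

text \<open>Points of the tripod Y_abc: (leg, distance from the centre); the centre is (0,0).\<close>
definition tp :: "nat \<Rightarrow> real \<Rightarrow> nat \<times> real" where
  "tp i r = (if r = 0 then (0, 0) else (i, r))"

text \<open>The comparison map pi on side i at arclength parameter t (from vertex i).\<close>
definition tri_pi :: "'a::metric_space \<Rightarrow> 'a \<Rightarrow> 'a \<Rightarrow> nat \<Rightarrow> real \<Rightarrow> nat \<times> real" where
  "tri_pi a b c i t = (let g = leg_len a b c i in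
      if t \<le> g then tp i (g - t) else tp ((i + 1) mod 3) (t - g))"

text \<open>Delta as the disjoint union of its three sides.\<close>
definition tri_dom :: "'a::metric_space \<Rightarrow> 'a \<Rightarrow> 'a \<Rightarrow> (nat \<times> real) set" where
  "tri_dom a b c = {(i, t). i < 3 \<and> t \<in> {0..side_len a b c i}}"

definition tripod :: "'a::metric_space \<Rightarrow> 'a \<Rightarrow> 'a \<Rightarrow> (nat \<times> real) set" where
  "tripod a b c = (\<lambda>(i, t). tri_pi a b c i t) ` tri_dom a b c"

definition fiber ::
  "'a::metric_space \<Rightarrow> 'a \<Rightarrow> 'a \<Rightarrow> (real \<Rightarrow> 'a) \<Rightarrow> (real \<Rightarrow> 'a) \<Rightarrow> (real \<Rightarrow> 'a) \<Rightarrow> nat \<times> real \<Rightarrow> 'a set" where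
  "fiber a b c p0 p1 p2 y =
     {side_pt p0 p1 p2 i t | i t. (i, t) \<in> tri_dom a b c \<and> tri_pi a b c i t = y}"

definition thin_triangle ::
  "real \<Rightarrow> 'a::metric_space \<Rightarrow> 'a \<Rightarrow> 'a \<Rightarrow> (real \<Rightarrow> 'a) \<Rightarrow> (real \<Rightarrow> 'a) \<Rightarrow> (real \<Rightarrow> 'a) \<Rightarrow> bool" where
  "thin_triangle \<nu> a b c p0 p1 p2 \<longleftrightarrow>
     (\<forall>y\<in>tripod a b c. diameter (fiber a b c p0 p1 p2 y) \<le> \<nu>)"

definition nbhd :: "real \<Rightarrow> 'a::metric_space set \<Rightarrow> 'a set" where
  "nbhd \<nu> U = {x. \<exists>u\<in>U. dist x u < \<nu>}"

definition rel_thin_triangle ::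
  "real \<Rightarrow> 'a::metric_space set \<Rightarrow> 'a \<Rightarrow> 'a \<Rightarrow> 'a \<Rightarrow> (real \<Rightarrow> 'a) \<Rightarrow> (real \<Rightarrow> 'a) \<Rightarrow> (real \<Rightarrow> 'a) \<Rightarrow> bool" where
  "rel_thin_triangle \<nu> U a b c p0 p1 p2 \<longleftrightarrow>
     \<not> thin_triangle \<nu> a b c p0 p1 p2 \<and>
     (\<forall>y\<in>tripod a b c. diameter (fiber a b c p0 p1 p2 y) \<le> \<nu> \<or>
                        fiber a b c p0 p1 p2 y \<subseteq> nbhd \<nu> U)"

definition fat_side ::
  "real \<Rightarrow> 'a::metric_space \<Rightarrow> 'a \<Rightarrow> 'a \<Rightarrow> (real \<Rightarrow> 'a) \<Rightarrow> (real \<Rightarrow> 'a) \<Rightarrow> (real \<Rightarrow> 'a) \<Rightarrow> nat \<Rightarrow> 'a set" where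
  "fat_side \<nu> a b c p0 p1 p2 i =
     side_pt p0 p1 p2 i ` {t \<in> {0..side_len a b c i}.
        diameter (fiber a b c p0 p1 p2 (tri_pi a b c i t)) \<ge> \<nu>}"

end

theory Submission
  imports Defs
begin

text \<open>Parametrise the tripod leg at vertex m by the arclength s from m. Its fibre consists of
  the two points at distance s from m on the two sides meeting at m, and by convexity of the
  metric their distance gap m s is nondecreasing in s (it vanishes at s = 0). So every fibre has
  diameter at most the largest distance between the three internal points, which are
  the preimages of the centre. On the side k whose fat part has diameter at most L, suppose
  gap k exceeds \<nu> at the internal point. Then the point where gap k equals \<nu> is fat and
  lies within (gap k - \<nu>)/2 of the internal point. Doing this from both ends of side k gives
  gap k + gap (k+1) \<le> 2(L + \<nu>) at the internal points, and the triangle inequality between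
  the internal points bounds the third gap by the same sum.\<close>

lemma diameter_leI:
  fixes S :: "'a::metric_space set"
  assumes "0 \<le> d" and "\<And>x y. x \<in> S \<Longrightarrow> y \<in> S \<Longrightarrow> dist x y \<le> d"
  shows "diameter S \<le> d"
  using assms by (auto simp: diameter_def intro: cSUP_least)

lemma geodesic_dist:
  assumes "geodesic g x y" "s \<in> {0..dist x y}" "t \<in> {0..dist x y}"
  shows "dist (g s) (g t) = \<bar>s - t\<bar>"
  using assms by (simp add: geodesic_def)

lemma geodesic_reverse:
  assumes "geodesic g x y"
  shows "geodesic (\<lambda>t. g (dist x y - t)) y x"
  using assms unfolding geodesic_def by (auto simp: dist_commute)

lemma geodesic_continuous_on:
  assumes "geodesic g x y"
  shows "continuous_on {0..dist x y} g"
proof (rule lipschitz_on_continuous_on)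
  show "1-lipschitz_on {0..dist x y} g"
    by (rule lipschitz_onI) (use geodesic_dist[OF assms] in \<open>auto simp: dist_real_def\<close>)
qed

lemma bounded_geodesic_image:
  assumes "geodesic g x y"
  shows "bounded (g ` {0..dist x y})"
  by (intro compact_imp_bounded compact_continuous_image geodesic_continuous_on[OF assms]) simp

lemma cs_geodesic_rescale:
  assumes "geodesic g x y" "0 \<le> r" "r \<le> dist x y"
  shows "cs_geodesic (\<lambda>l. g (l * r))"
proof -
  have dist_eq: "dist (g (s * r)) (g (t * r)) = \<bar>s - t\<bar> * r"
    if "s \<in> {0..1}" "t \<in> {0..1}" for s t
  proof -
    have "s * r \<in> {0..dist x y}" "t * r \<in> {0..dist x y}"
      using that assms(2,3) by (auto intro: mult_left_le_one_le order_trans)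
    then have "dist (g (s * r)) (g (t * r)) = \<bar>s * r - t * r\<bar>"
      by (rule geodesic_dist[OF assms(1)])
    also have "\<dots> = \<bar>s - t\<bar> * r"
      using assms(2) by (simp add: left_diff_distrib[symmetric] abs_mult)
    finally show ?thesis .
  qed
  moreover have "dist (g (0 * r)) (g (1 * r)) = r"
    using dist_eq[of 0 1] by simp
  ultimately show ?thesis
    unfolding cs_geodesic_def by simp
qed

lemma convex_metricD:
  fixes \<gamma>1 \<gamma>2 :: "real \<Rightarrow> 'a::metric_space"
  assumes "convex_metric (UNIV :: 'a set)" "cs_geodesic \<gamma>1" "cs_geodesic \<gamma>2"
  shows "convex_on {0..1} (\<lambda>t. dist (\<gamma>1 t) (\<gamma>2 t))"
  using assms by (simp add: convex_metric_def)

lemma convex_metric_geodesics_diverge: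
  fixes g h :: "real \<Rightarrow> 'a::metric_space"
  assumes cm: "convex_metric (UNIV :: 'a set)"
    and g: "geodesic g x y" and h: "geodesic h x z"
    and s: "0 \<le> s" "s \<le> s'" "s' \<le> dist x y" "s' \<le> dist x z"
  shows "dist (g s) (h s) \<le> dist (g s') (h s')"
proof (cases "s' = 0")
  case True
  then show ?thesis using s by simp
next
  case False
  then have s'_pos: "s' > 0" using s by simp
  let ?D = "\<lambda>l. dist (g (l * s')) (h (l * s'))"
  have "cs_geodesic (\<lambda>l. g (l * s'))" "cs_geodesic (\<lambda>l. h (l * s'))"
    using cs_geodesic_rescale[OF g, of s'] cs_geodesic_rescale[OF h, of s'] s by auto
  then have "convex_on {0..1} ?D"
    by (rule convex_metricD[OF cm])
  then have "?D (s / s') \<le> max (?D 0) (?D 1)"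
    by (rule convex_on_le_max) (use s s'_pos in auto)
  moreover have "?D 0 = 0" using g h by (simp add: geodesic_def)
  ultimately show ?thesis using s'_pos by simp
qed

lemma geodesics_gap_attained:
  assumes g: "geodesic g x y" and h: "geodesic h x z"
    and r: "0 \<le> r" "r \<le> dist x y" "r \<le> dist x z"
    and \<nu>: "0 \<le> \<nu>" "\<nu> \<le> dist (g r) (h r)"
  shows "\<exists>u\<in>{0..r}. dist (g u) (h u) = \<nu> \<and> dist (g r) (h r) \<le> 2 * (r - u) + \<nu>"
proof -
  have "continuous_on {0..r} (\<lambda>t. dist (g t) (h t))"
    using r by (intro continuous_on_dist continuous_on_subset[OF geodesic_continuous_on[OF g]]
        continuous_on_subset[OF geodesic_continuous_on[OF h]]) auto
  moreover have "dist (g 0) (h 0) = 0" using g h by (simp add: geodesic_def)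
  ultimately obtain u where u: "0 \<le> u" "u \<le> r" "dist (g u) (h u) = \<nu>"
    using IVT'[of "\<lambda>t. dist (g t) (h t)" 0 \<nu> r] r \<nu> by auto
  have "dist (g r) (h r) \<le> dist (g r) (g u) + dist (g u) (h u) + dist (h u) (h r)"
    using dist_triangle[of "g r" "h r" "g u"] dist_triangle[of "g u" "h r" "h u"] by linarith
  also have "dist (g r) (g u) = r - u" using geodesic_dist[OF g] u r by auto
  also have "dist (h u) (h r) = r - u" using geodesic_dist[OF h] u r by auto
  finally show ?thesis using u by auto
qed

locale geo_triangle =
  fixes a b c :: "'a::metric_space" and p0 p1 p2 :: "real \<Rightarrow> 'a"
  assumes triangle: "geodesic_triangle a b c p0 p1 p2"
begin

abbreviation "side \<equiv> side_pt p0 p1 p2"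
abbreviation "leg \<equiv> leg_len a b c"
abbreviation "slen \<equiv> side_len a b c"
abbreviation "fibre \<equiv> fiber a b c p0 p1 p2"

definition vertex :: "nat \<Rightarrow> 'a" where
  "vertex j = (if j = 0 then a else if j = 1 then b else c)"

definition nxt :: "nat \<Rightarrow> nat" where "nxt j = (j + 1) mod 3"
definition prv :: "nat \<Rightarrow> nat" where "prv j = (j + 2) mod 3"

lemma less3_cases: "j < 3 \<Longrightarrow> j = 0 \<or> j = 1 \<or> j = (2::nat)"
  by auto

lemma nxt_less [simp]: "nxt j < 3" and prv_less [simp]: "prv j < 3"
  by (simp_all add: nxt_def prv_def)

lemma nxt_prv [simp]: "j < 3 \<Longrightarrow> nxt (prv j) = j"
  and prv_nxt [simp]: "j < 3 \<Longrightarrow> prv (nxt j) = j"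
  and prv_prv: "j < 3 \<Longrightarrow> prv (prv j) = nxt j"
  using less3_cases[of j] by (auto simp: nxt_def prv_def)

lemma index_cases: "j < 3 \<Longrightarrow> k < 3 \<Longrightarrow> j = k \<or> j = nxt k \<or> j = prv k"
  using less3_cases[of j] less3_cases[of k] by (auto simp: nxt_def prv_def)

lemma side_simps [simp]: "side 0 = p0" "side (Suc 0) = p1" "side 2 = p2"
  by (auto simp: side_pt_def fun_eq_iff)

lemma geodesic_side: "j < 3 \<Longrightarrow> geodesic (side j) (vertex j) (vertex (nxt j))"
  using triangle less3_cases[of j] by (auto simp: geodesic_triangle_def vertex_def nxt_def)

lemma slen_eq_dist: "j < 3 \<Longrightarrow> slen j = dist (vertex j) (vertex (nxt j))"
  using less3_cases[of j] by (auto simp: side_len_def vertex_def nxt_def dist_commute)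

lemma leg_nonneg: "j < 3 \<Longrightarrow> 0 \<le> leg j"
  using less3_cases[of j] dist_triangle[of a b c] dist_triangle[of b c a] dist_triangle[of c a b]
  by (auto simp: leg_len_def gromov_def dist_commute)

lemma slen_eq_legs: "j < 3 \<Longrightarrow> slen j = leg j + leg (nxt j)"
  using less3_cases[of j]
  by (auto simp: leg_len_def gromov_def side_len_def nxt_def dist_commute field_simps)

lemma leg_le_slen: "j < 3 \<Longrightarrow> leg j \<le> slen j"
  and leg_le_slen_prv: "j < 3 \<Longrightarrow> leg j \<le> slen (prv j)"
  using slen_eq_legs[of j] slen_eq_legs[of "prv j"] leg_nonneg[of "nxt j"] leg_nonneg[of "prv j"]
  by auto

definition incoming_pt :: "nat \<Rightarrow> real \<Rightarrow> 'a" where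
  "incoming_pt m s = side (prv m) (slen (prv m) - s)"

definition gap :: "nat \<Rightarrow> real \<Rightarrow> real" where
  "gap m s = dist (side m s) (incoming_pt m s)"

definition internal_pt :: "nat \<Rightarrow> 'a" where
  "internal_pt j = side j (leg j)"

lemma geodesic_incoming_pt:
  "m < 3 \<Longrightarrow> geodesic (incoming_pt m) (vertex m) (vertex (prv m))"
  using geodesic_reverse[OF geodesic_side[of "prv m"]] slen_eq_dist[of "prv m"]
  by (simp add: incoming_pt_def[abs_def])

lemma incoming_pt_leg: "m < 3 \<Longrightarrow> incoming_pt m (leg m) = internal_pt (prv m)"
  using slen_eq_legs[of "prv m"] by (simp add: incoming_pt_def internal_pt_def)

lemma gap_leg: "m < 3 \<Longrightarrow> gap m (leg m) = dist (internal_pt m) (internal_pt (prv m))"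
  by (simp add: gap_def incoming_pt_leg internal_pt_def)

lemma leg_le_dist: "m < 3 \<Longrightarrow> leg m \<le> dist (vertex m) (vertex (nxt m))"
  and leg_le_dist_prv: "m < 3 \<Longrightarrow> leg m \<le> dist (vertex m) (vertex (prv m))"
  using leg_le_slen[of m] leg_le_slen_prv[of m] slen_eq_dist[of m] slen_eq_dist[of "prv m"]
  by (auto simp: dist_commute)

lemma gap_mono:
  assumes cm: "convex_metric (UNIV :: 'a set)" and m: "m < 3"
    and s: "0 \<le> s" "s \<le> s'" "s' \<le> leg m"
  shows "gap m s \<le> gap m s'"
  unfolding gap_def
  by (rule convex_metric_geodesics_diverge[OF cm geodesic_side[OF m] geodesic_incoming_pt[OF m]
        s(1,2)]) (use s leg_le_dist[OF m] leg_le_dist_prv[OF m] in auto)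

lemma tri_pi_side:
  assumes "m < 3" "s \<in> {0..leg m}"
  shows "tri_pi a b c m s = tp m (leg m - s)"
  using assms by (simp add: tri_pi_def)

lemma tri_pi_incoming_pt:
  assumes m: "m < 3" and s: "s \<in> {0..leg m}"
  shows "tri_pi a b c (prv m) (slen (prv m) - s) = tp m (leg m - s)"
proof -
  have slen: "slen (prv m) = leg (prv m) + leg m"
    using slen_eq_legs[of "prv m"] m by simp
  have succ: "(prv m + 1) mod 3 = m"
    using nxt_prv[OF m] by (simp add: nxt_def)
  show ?thesis
  proof (cases "s = leg m")
    case True
    then show ?thesis using slen by (simp add: tri_pi_def tp_def)
  next
    case False
    then show ?thesis using slen succ s by (simp add: tri_pi_def)
  qed
qed

lemma side_mem_fibre:
  "m < 3 \<Longrightarrow> s \<in> {0..leg m} \<Longrightarrow> side m s \<in> fibre (tp m (leg m - s))"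
  using tri_pi_side[of m s] leg_le_slen[of m] unfolding fiber_def tri_dom_def by force

lemma incoming_pt_mem_fibre:
  "m < 3 \<Longrightarrow> s \<in> {0..leg m} \<Longrightarrow> incoming_pt m s \<in> fibre (tp m (leg m - s))"
  using tri_pi_incoming_pt[of m s] leg_le_slen_prv[of m]
  unfolding fiber_def tri_dom_def incoming_pt_def
  by (auto intro!: exI[of _ "prv m"] exI[of _ "slen (prv m) - s"])

lemma fibre_memE:
  assumes "x \<in> fibre y"
  obtains m s where "m < 3" "s \<in> {0..leg m}" "y = tp m (leg m - s)"
    "x = side m s \<or> x = incoming_pt m s"
proof -
  obtain i t where it: "x = side i t" "i < 3" "t \<in> {0..slen i}" "y = tri_pi a b c i t"
    using assms unfolding fiber_def tri_dom_def by auto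
  show ?thesis
  proof (cases "t \<le> leg i")
    case True
    then show ?thesis using it by (intro that[of i t]) (auto simp: tri_pi_def)
  next
    case False
    have "tri_pi a b c i t = tp (nxt i) (t - leg i)"
      using False by (simp add: tri_pi_def nxt_def)
    moreover have "slen i = leg i + leg (nxt i)" using slen_eq_legs it(2) by simp
    ultimately show ?thesis
      using it False by (intro that[of "nxt i" "slen i - t"]) (auto simp: incoming_pt_def)
  qed
qed

lemma bounded_sides: "bounded (\<Union>j<3. side j ` {0..slen j})"
  using bounded_geodesic_image[OF geodesic_side] slen_eq_dist by (simp add: bounded_UN)

lemma bounded_fibre: "bounded (fibre y)"
  by (rule bounded_subset[OF bounded_sides]) (auto simp: fiber_def tri_dom_def)

lemma bounded_fat_side: "i < 3 \<Longrightarrow> bounded (fat_side \<nu> a b c p0 p1 p2 i)"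
  by (rule bounded_subset[OF bounded_sides]) (auto simp: fat_side_def)

lemma internal_pt_dist_le:
  assumes B: "\<forall>j<3. gap j (leg j) \<le> B" and jk: "j < 3" "k < 3"
  shows "dist (internal_pt j) (internal_pt k) \<le> B"
  using index_cases[OF jk] B[rule_format, of j] B[rule_format, of k] jk
  by (auto simp: gap_leg dist_commute order_trans[OF zero_le_dist])

lemma fibre_dist_le:
  assumes cm: "convex_metric (UNIV :: 'a set)" and B: "\<forall>j<3. gap j (leg j) \<le> B"
    and x: "x \<in> fibre y" and x': "x' \<in> fibre y"
  shows "dist x x' \<le> B"
proof -
  obtain m s where ms: "m < 3" "s \<in> {0..leg m}" "y = tp m (leg m - s)"
    "x = side m s \<or> x = incoming_pt m s"
    using x by (rule fibre_memE)
  obtain m' s' where ms': "m' < 3" "s' \<in> {0..leg m'}" "y = tp m' (leg m' - s')"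
    "x' = side m' s' \<or> x' = incoming_pt m' s'"
    using x' by (rule fibre_memE)
  show ?thesis
  proof (cases "s = leg m")
    case True
    then have "s' = leg m'" using ms ms' by (auto simp: tp_def split: if_splits)
    then show ?thesis
      using True ms ms' internal_pt_dist_le[OF B] by (auto simp: incoming_pt_leg internal_pt_def)
  next
    case False
    then have "m' = m" "s' = s" using ms ms' by (auto simp: tp_def split: if_splits)
    then have "dist x x' \<le> gap m s" using ms(4) ms'(4) by (auto simp: gap_def dist_commute)
    also have "\<dots> \<le> gap m (leg m)" using gap_mono[OF cm ms(1)] ms(2) by auto
    also have "\<dots> \<le> B" using B ms(1) by auto
    finally show ?thesis .
  qed
qed

lemma thin_if_internal_gaps_le:
  assumes cm: "convex_metric (UNIV :: 'a set)" and B: "\<forall>j<3. gap j (leg j) \<le> B"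
  shows "thin_triangle B a b c p0 p1 p2"
proof -
  have "0 \<le> B" using order_trans[OF _ B[rule_format, of 0]] by (simp add: gap_def)
  then show ?thesis
    unfolding thin_triangle_def using fibre_dist_le[OF cm B] by (auto intro: diameter_leI)
qed

lemma fat_side_if_gap:
  assumes m: "m < 3" and s: "s \<in> {0..leg m}" and \<nu>: "\<nu> \<le> gap m s"
  shows "side m s \<in> fat_side \<nu> a b c p0 p1 p2 m"
    and "incoming_pt m s \<in> fat_side \<nu> a b c p0 p1 p2 (prv m)"
proof -
  have fat: "\<nu> \<le> diameter (fibre (tp m (leg m - s)))"
    using \<nu> diameter_bounded_bound[OF bounded_fibre side_mem_fibre[OF m s]
        incoming_pt_mem_fibre[OF m s]] by (simp add: gap_def)
  then show "side m s \<in> fat_side \<nu> a b c p0 p1 p2 m"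
    using tri_pi_side[OF m s] s leg_le_slen[OF m] unfolding fat_side_def by (auto intro!: image_eqI)
  show "incoming_pt m s \<in> fat_side \<nu> a b c p0 p1 p2 (prv m)"
    using fat tri_pi_incoming_pt[OF m s] s leg_le_slen_prv[OF m]
    unfolding fat_side_def incoming_pt_def by (auto intro!: image_eqI)
qed

lemma gap_escape_point:
  assumes m: "m < 3" and \<nu>: "0 \<le> \<nu>"
  obtains u where "u \<in> {0..leg m}" "gap m (leg m) \<le> 2 * (leg m - u) + \<nu>"
    "\<nu> \<le> gap m u \<or> u = leg m"
proof (cases "\<nu> \<le> gap m (leg m)")
  case True
  then show ?thesis
    using geodesics_gap_attained[OF geodesic_side[OF m] geodesic_incoming_pt[OF m] leg_nonneg[OF m]
        leg_le_dist[OF m] leg_le_dist_prv[OF m] \<nu>] that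
    unfolding gap_def by force
next
  case False
  then show ?thesis using leg_nonneg[OF m] by (intro that[of "leg m"]) auto
qed

lemma internal_gaps_le_if_internal_pt_fat:
  assumes k: "k < 3" and \<nu>: "0 \<le> \<nu>"
    and fat: "internal_pt k \<in> fat_side \<nu> a b c p0 p1 p2 k"
    and L: "diameter (fat_side \<nu> a b c p0 p1 p2 k) \<le> L"
  shows "gap k (leg k) + gap (nxt k) (leg (nxt k)) \<le> 2 * (L + \<nu>)"
proof -
  let ?fat = "fat_side \<nu> a b c p0 p1 p2 k"
  obtain u where u: "u \<in> {0..leg k}" "gap k (leg k) \<le> 2 * (leg k - u) + \<nu>"
    "\<nu> \<le> gap k u \<or> u = leg k"
    using gap_escape_point[OF k \<nu>] .
  obtain w where w: "w \<in> {0..leg (nxt k)}"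
    "gap (nxt k) (leg (nxt k)) \<le> 2 * (leg (nxt k) - w) + \<nu>"
    "\<nu> \<le> gap (nxt k) w \<or> w = leg (nxt k)"
    using gap_escape_point[OF nxt_less[of k] \<nu>] .
  have "side k u \<in> ?fat"
    using u fat fat_side_if_gap(1)[OF k u(1)] by (auto simp: internal_pt_def)
  moreover have "incoming_pt (nxt k) w \<in> ?fat"
    using w fat fat_side_if_gap(2)[OF nxt_less[of k] w(1)] k by (auto simp: incoming_pt_leg)
  ultimately have "dist (side k u) (incoming_pt (nxt k) w) \<le> L"
    using diameter_bounded_bound[OF bounded_fat_side[OF k]] L by (meson order_trans)
  moreover have "dist (side k u) (incoming_pt (nxt k) w) = (leg k - u) + (leg (nxt k) - w)"
    using geodesic_dist[OF geodesic_side[OF k], of u "slen k - w"] slen_eq_dist[OF k]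
      slen_eq_legs[OF k] u(1) w(1) k
    by (auto simp: incoming_pt_def)
  ultimately show ?thesis using u(2) w(2) by (simp add: algebra_simps)
qed

lemma internal_gaps_on_side_le:
  assumes k: "k < 3" and \<nu>: "0 \<le> \<nu>"
    and L: "0 \<le> L" "diameter (fat_side \<nu> a b c p0 p1 p2 k) \<le> L"
  shows "gap k (leg k) + gap (nxt k) (leg (nxt k)) \<le> 2 * (L + \<nu>)"
proof (cases "\<nu> \<le> gap k (leg k) \<or> \<nu> \<le> gap (nxt k) (leg (nxt k))")
  case True
  moreover have "incoming_pt (nxt k) (leg (nxt k)) = internal_pt k"
    using incoming_pt_leg[OF nxt_less[of k]] k by simp
  ultimately have "internal_pt k \<in> fat_side \<nu> a b c p0 p1 p2 k"
    using fat_side_if_gap(1)[OF k, of "leg k" \<nu>]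
      fat_side_if_gap(2)[OF nxt_less[of k], of "leg (nxt k)" \<nu>]
      leg_nonneg[OF k] leg_nonneg[OF nxt_less[of k]] k
    by (auto simp: internal_pt_def)
  then show ?thesis by (rule internal_gaps_le_if_internal_pt_fat[OF k \<nu> _ L(2)])
next
  case False
  then show ?thesis using L(1) by (auto simp: algebra_simps)
qed

lemma internal_gaps_le:
  assumes k: "k < 3" and \<nu>: "0 \<le> \<nu>"
    and L: "0 \<le> L" "diameter (fat_side \<nu> a b c p0 p1 p2 k) \<le> L"
  shows "\<forall>j<3. gap j (leg j) \<le> 2 * (L + \<nu>)"
proof (intro allI impI)
  have sum: "gap k (leg k) + gap (nxt k) (leg (nxt k)) \<le> 2 * (L + \<nu>)"
    by (rule internal_gaps_on_side_le[OF k \<nu> L])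
  have third: "gap (prv k) (leg (prv k)) \<le> gap k (leg k) + gap (nxt k) (leg (nxt k))"
    using dist_triangle[of "internal_pt (prv k)" "internal_pt (nxt k)" "internal_pt k"] k
    by (simp add: gap_leg prv_prv dist_commute)
  have nonneg: "0 \<le> gap k (leg k)" "0 \<le> gap (nxt k) (leg (nxt k))"
    by (simp_all add: gap_def)
  fix j :: nat assume "j < 3"
  then consider "j = k" | "j = nxt k" | "j = prv k" using index_cases k by blast
  then show "gap j (leg j) \<le> 2 * (L + \<nu>)"
    using sum third nonneg by cases auto
qed

end

theorem lemma2p3:
  fixes Z :: "'a::metric_space set" and \<nu> L :: real
    and a b c :: 'a and p0 p1 p2 :: "real \<Rightarrow> 'a"
  assumes "geodesic_space (UNIV :: 'a set)"
    and "convex_metric (UNIV :: 'a set)"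
    and "\<nu> > 0" and "L \<ge> 0"
    and "geodesic_triangle a b c p0 p1 p2"
    and "rel_thin_triangle \<nu> Z a b c p0 p1 p2"
    and "\<exists>i<3. diameter (fat_side \<nu> a b c p0 p1 p2 i) \<le> L"
  shows "thin_triangle (2 * (L + \<nu>)) a b c p0 p1 p2"
proof -
  interpret geo_triangle a b c p0 p1 p2
    by unfold_locales (fact assms(5))
  obtain k where "k < 3" "diameter (fat_side \<nu> a b c p0 p1 p2 k) \<le> L"
    using assms(7) by blast
  then have "\<forall>j<3. gap j (leg j) \<le> 2 * (L + \<nu>)"
    using internal_gaps_le assms(3,4) by simp
  then show ?thesis
    by (rule thin_if_internal_gaps_le[OF assms(2)])
qed

end
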